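(* $$\{\varphi\in\mathrm{End}_K(P_n)\mid [x_1,\varphi]\in F_n,\dots,[x_n,\varphi]\in F_n\}=\begin{cases}\mathbb{S}_1 & n=1,\\ P_n+F_n & n>1,\end{cases}$$ where $P_n=K[x_1,\dots,x_n]\subset\mathbb{S}_n$.
   Context: $K$ is a field of characteristic zero. $\mathbb{S}_n$ is the $K$-algebra generated by $x_1,\dots,x_n,y_1,\dots,y_n$ with defining relations $y_ix_i=1$ and $[x_i,y_j]=[x_i,x_j]=[y_i,y_j]=0$ for $i\ne j$; it acts faithfully on $P_n=K[x_1,\dots,x_n]$ by $x_i*x^\alpha=x^{\alpha+e_i}$, $y_i*x^\alpha=x^{\alpha-e_i}$ if $\alpha_i>0$ and $0$ otherwise, so $\mathbb{S}_n\subset\mathrm{End}_K(P_n)$. For $k,l\in\mathbb{N}$, $E_{kl}(i):=x_i^ky_i^l-x_i^{k+1}y_i^{l+1}$; for $\alpha,\beta\in\mathbb{N}^n$, $E_{\alpha\beta}:=\prod_{i=1}^nE_{\alpha_i\beta_i}(i)$ (so $E_{\alpha\beta}*x^\gamma=\delta_{\beta\gamma}x^\alpha$), and $F_n:=\bigoplus_{\alpha,\beta\in\mathbb{N}^n}KE_{\alpha\beta}$. *)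

theory Defs
  imports "HOL-Library.Poly_Mapping"
begin

text \<open>Monomials x^alpha are represented by exponent vectors alpha :: nat =>0 nat;
  the variables x_1,...,x_n correspond to indices 0,...,n-1.
  Polynomials are finitely supported coefficient functions on monomials.\<close>

type_synonym 'k pol = "(nat \<Rightarrow>\<^sub>0 nat) \<Rightarrow>\<^sub>0 'k"

definition monoms :: "nat \<Rightarrow> (nat \<Rightarrow>\<^sub>0 nat) set" where
  "monoms n = {\<alpha>. Poly_Mapping.keys \<alpha> \<subseteq> {..<n}}"

definition Pn :: "nat \<Rightarrow> ('k::field_char_0) pol set" where
  "Pn n = {p. Poly_Mapping.keys p \<subseteq> monoms n}"

definition smul :: "'k::field_char_0 \<Rightarrow> 'k pol \<Rightarrow> 'k pol" where
  "smul c p = Poly_Mapping.single 0 c * p"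

text \<open>End_K(P_n): K-linear maps P_n -> P_n (extended by 0 outside P_n, so that
  each endomorphism has a unique representative).\<close>
definition EndK :: "nat \<Rightarrow> (('k::field_char_0) pol \<Rightarrow> 'k pol) set" where
  "EndK n = {\<phi>. (\<forall>p\<in>Pn n. \<phi> p \<in> Pn n)
               \<and> (\<forall>p\<in>Pn n. \<forall>q\<in>Pn n. \<phi> (p + q) = \<phi> p + \<phi> q)
               \<and> (\<forall>c. \<forall>p\<in>Pn n. \<phi> (smul c p) = smul c (\<phi> p))
               \<and> (\<forall>p. p \<notin> Pn n \<longrightarrow> \<phi> p = 0)}"

definition restr :: "nat \<Rightarrow> (('k::field_char_0) pol \<Rightarrow> 'k pol) \<Rightarrow> 'k pol \<Rightarrow> 'k pol" where
  "restr n f = (\<lambda>p. if p \<in> Pn n then f p else 0)"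

definition mult_op :: "nat \<Rightarrow> ('k::field_char_0) pol \<Rightarrow> 'k pol \<Rightarrow> 'k pol" where
  "mult_op n a = restr n (\<lambda>p. a * p)"

definition xop :: "nat \<Rightarrow> nat \<Rightarrow> ('k::field_char_0) pol \<Rightarrow> 'k pol" where
  "xop n i = mult_op n (Poly_Mapping.single (Poly_Mapping.single i 1) 1)"

definition yop :: "nat \<Rightarrow> nat \<Rightarrow> ('k::field_char_0) pol \<Rightarrow> 'k pol" where
  "yop n i = restr n (\<lambda>q. \<Sum>\<alpha>\<in>Poly_Mapping.keys q.
      if Poly_Mapping.lookup \<alpha> i > 0 then Poly_Mapping.single (\<alpha> - Poly_Mapping.single i 1) (Poly_Mapping.lookup q \<alpha>)
      else 0)"

definition op_add :: "('k::field_char_0 pol \<Rightarrow> 'k pol) \<Rightarrow> ('k pol \<Rightarrow> 'k pol) \<Rightarrow> 'k pol \<Rightarrow> 'k pol" where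
  "op_add f g = (\<lambda>p. f p + g p)"

definition op_diff :: "('k::field_char_0 pol \<Rightarrow> 'k pol) \<Rightarrow> ('k pol \<Rightarrow> 'k pol) \<Rightarrow> 'k pol \<Rightarrow> 'k pol" where
  "op_diff f g = (\<lambda>p. f p - g p)"

definition op_smul :: "'k::field_char_0 \<Rightarrow> ('k pol \<Rightarrow> 'k pol) \<Rightarrow> 'k pol \<Rightarrow> 'k pol" where
  "op_smul c f = (\<lambda>p. smul c (f p))"

definition commut :: "('k::field_char_0 pol \<Rightarrow> 'k pol) \<Rightarrow> ('k pol \<Rightarrow> 'k pol) \<Rightarrow> 'k pol \<Rightarrow> 'k pol" where
  "commut a b = op_diff (a \<circ> b) (b \<circ> a)"

text \<open>The identity of End_K(P_n), and S_n as the subalgebra of End_K(P_n) generated by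
  x_1,...,x_n,y_1,...,y_n (S_n acts faithfully on P_n).\<close>
definition idop :: "nat \<Rightarrow> ('k::field_char_0) pol \<Rightarrow> 'k pol" where
  "idop n = restr n id"

inductive_set Sn :: "nat \<Rightarrow> ('k::field_char_0 pol \<Rightarrow> 'k pol) set" for n where
  S_one: "idop n \<in> Sn n"
| S_x: "i < n \<Longrightarrow> xop n i \<in> Sn n"
| S_y: "i < n \<Longrightarrow> yop n i \<in> Sn n"
| S_add: "f \<in> Sn n \<Longrightarrow> g \<in> Sn n \<Longrightarrow> op_add f g \<in> Sn n"
| S_smul: "f \<in> Sn n \<Longrightarrow> op_smul c f \<in> Sn n"
| S_comp: "f \<in> Sn n \<Longrightarrow> g \<in> Sn n \<Longrightarrow> f \<circ> g \<in> Sn n"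

definition E1 :: "nat \<Rightarrow> nat \<Rightarrow> nat \<Rightarrow> nat \<Rightarrow> ('k::field_char_0) pol \<Rightarrow> 'k pol" where
  "E1 n k l i = op_diff ((xop n i ^^ k) \<circ> (yop n i ^^ l) \<circ> idop n)
                        ((xop n i ^^ (k+1)) \<circ> (yop n i ^^ (l+1)) \<circ> idop n)"

definition Eab :: "nat \<Rightarrow> (nat \<Rightarrow>\<^sub>0 nat) \<Rightarrow> (nat \<Rightarrow>\<^sub>0 nat) \<Rightarrow> ('k::field_char_0) pol \<Rightarrow> 'k pol" where
  "Eab n \<alpha> \<beta> = foldr (\<lambda>i f. E1 n (Poly_Mapping.lookup \<alpha> i) (Poly_Mapping.lookup \<beta> i) i \<circ> f) [0..<n] (idop n)"

definition Fn :: "nat \<Rightarrow> ('k::field_char_0 pol \<Rightarrow> 'k pol) set" where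
  "Fn n = {(\<lambda>p. \<Sum>ab\<in>S. smul (c ab) (Eab n (fst ab) (snd ab) p)) | S c.
             finite S \<and> S \<subseteq> monoms n \<times> monoms n}"

definition PplusF :: "nat \<Rightarrow> ('k::field_char_0 pol \<Rightarrow> 'k pol) set" where
  "PplusF n = {op_add (mult_op n a) f | a f. a \<in> Pn n \<and> f \<in> Fn n}"

end

theory Submission
  imports Defs "HOL-Library.FuncSet"
begin

text \<open>
  Let \<open>C\<^sub>n\<close> be the set of endomorphisms \<open>\<phi>\<close> of \<open>P\<^sub>n = K[x\<^sub>1,\<dots>,x\<^sub>n]\<close> with \<open>[x\<^sub>i,\<phi>] \<in> F\<^sub>n\<close> for
  all \<open>i\<close>.  The proof rests on two descriptions in terms of the values on monomials:

  \<^item> \<open>F\<^sub>n\<close> consists exactly of the endomorphisms killing all but finitely many monomials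
    (\<open>E\<^sub>\<alpha>\<^sub>\<beta>\<close> is the matrix unit \<open>x\<^sup>\<gamma> \<mapsto> \<delta>\<^sub>\<beta>\<^sub>\<gamma> x\<^sup>\<alpha>\<close>);
  \<^item> hence \<open>[x\<^sub>i,\<phi>] \<in> F\<^sub>n\<close> iff \<open>\<phi>(x\<^sup>g x\<^sub>i) = x\<^sub>i \<phi>(x\<^sup>g)\<close> for all but finitely many \<open>g\<close>.

  For \<open>\<phi> \<in> C\<^sub>n\<close> this yields a bound \<open>M\<close> such that \<open>\<phi>(x\<^sup>g x\<^sup>d) = x\<^sup>d \<phi>(x\<^sup>g)\<close> as soon as some
  exponent of \<open>g\<close> is at least \<open>M\<close>; so \<open>\<phi>\<close> is determined modulo \<open>F\<^sub>n\<close> by \<open>R = \<phi>(x\<^sup>M\<^sup>\<dots>\<^sup>M)\<close>.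
  For \<open>n \<ge> 2\<close>, \<open>R\<close> is divisible by \<open>x\<^sup>M\<^sup>\<dots>\<^sup>M\<close>, say \<open>R = x\<^sup>M\<^sup>\<dots>\<^sup>M U\<close>, and \<open>\<phi> \<equiv> U\<close> modulo \<open>F\<^sub>n\<close>.
  For \<open>n = 1\<close>, \<open>\<phi> \<equiv> R(x) y\<^sup>M\<close> modulo \<open>F\<^sub>1\<close>, an element of \<open>\<SS>\<^sub>1\<close> (which contains \<open>F\<^sub>1\<close>).
  Conversely \<open>P\<^sub>n + F\<^sub>n \<subseteq> C\<^sub>n\<close> is immediate, and \<open>\<SS>\<^sub>1 \<subseteq> C\<^sub>1\<close> follows by induction over the
  generation of \<open>\<SS>\<^sub>1\<close>: \<open>[x,-]\<close> is a derivation, and \<open>F\<^sub>n\<close> is stable under composition with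
  endomorphisms on the left and with operators whose matrices have finite rows on the right.
\<close>

abbreviation lookup :: "('a \<Rightarrow>\<^sub>0 'b::zero) \<Rightarrow> 'a \<Rightarrow> 'b" where
  "lookup \<equiv> Poly_Mapping.lookup"
abbreviation keys :: "('a \<Rightarrow>\<^sub>0 'b::zero) \<Rightarrow> 'a set" where
  "keys \<equiv> Poly_Mapping.keys"
abbreviation single :: "'a \<Rightarrow> 'b::zero \<Rightarrow> 'a \<Rightarrow>\<^sub>0 'b" where
  "single \<equiv> Poly_Mapping.single"

abbreviation xpow :: "(nat \<Rightarrow>\<^sub>0 nat) \<Rightarrow> 'k::field_char_0 pol" where
  "xpow g \<equiv> single g 1"
abbreviation uvec :: "nat \<Rightarrow> nat \<Rightarrow>\<^sub>0 nat" where
  "uvec i \<equiv> single i 1"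

lemma lookup_smul [simp]: "lookup (smul c p) a = c * lookup p a"
  unfolding smul_def mult_map_scale_conv_mult[symmetric] by (simp add: map.rep_eq when_def)

lemma smul_add: "smul c (p + q) = smul c p + smul c q"
  by (rule poly_mapping_eqI) (simp add: lookup_add algebra_simps)

lemma smul_diff: "smul c (p - q) = smul c p - smul c q"
  by (rule poly_mapping_eqI) (simp add: lookup_minus algebra_simps)

lemma smul_zero [simp]: "smul c 0 = 0"
  by (rule poly_mapping_eqI) simp

lemma smul_zero_left [simp]: "smul 0 p = 0"
  by (rule poly_mapping_eqI) simp

lemma smul_smul: "smul c (smul d p) = smul (c * d) p"
  by (rule poly_mapping_eqI) simp

lemma smul_minus_one: "smul (-1) p = - p"
  by (rule poly_mapping_eqI) simp

lemma smul_sum: "smul c (sum f A) = (\<Sum>x\<in>A. smul c (f x))"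
  by (rule poly_mapping_eqI) (simp add: lookup_sum sum_distrib_left)

lemma smul_mult: "smul c (a * p) = a * smul c p"
  unfolding smul_def by (simp add: mult.left_commute)

lemma smul_single: "smul c (single a d) = single a (c * d)"
  by (rule poly_mapping_eqI) (simp add: lookup_single when_def)

lemma keys_smul: "keys (smul c p) \<subseteq> keys p"
  by (auto simp: in_keys_iff)

lemma poly_expand: "p = (\<Sum>g\<in>keys p. single g (lookup p g))"
  by (rule poly_mapping_eqI) (simp add: lookup_sum lookup_single when_def in_keys_iff)

lemma xpow_mult: "xpow a * xpow b = xpow (a + b)"
  by (simp add: mult_single)

lemma xpow_cancel: "xpow a * p = xpow a * q \<Longrightarrow> p = (q :: 'k::field_char_0 pol)"
  by (metis mult_left_cancel one_neq_zero lookup_single_eq lookup_zero)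

lemma keys_xpow_mult:
  assumes "b \<in> keys (xpow d * (q :: 'k::field_char_0 pol))"
  shows "lookup d k \<le> lookup b k"
proof -
  from assms keys_mult[of "xpow d" q] obtain c where "b = d + c"
    by auto
  then show ?thesis by (simp add: lookup_add)
qed

lemma monoms_iff: "a \<in> monoms n \<longleftrightarrow> (\<forall>j\<ge>n. lookup a j = 0)"
  by (auto simp: monoms_def in_keys_iff) (metis leI less_numeral_extra(3))
lemma monoms_out: "a \<in> monoms n \<Longrightarrow> n \<le> j \<Longrightarrow> lookup a j = 0"
  by (simp add: monoms_iff)
lemma monoms_zero [simp]: "0 \<in> monoms n"
  by (simp add: monoms_def)
lemma monoms_add [simp]: "a \<in> monoms n \<Longrightarrow> b \<in> monoms n \<Longrightarrow> a + b \<in> monoms n"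
  by (simp add: monoms_iff lookup_add)
lemma monoms_minus [simp]: "a \<in> monoms n \<Longrightarrow> a - b \<in> monoms n"
  by (simp add: monoms_iff lookup_minus)
lemma monoms_single [simp]: "i < n \<Longrightarrow> single i k \<in> monoms n"
  by (simp add: monoms_iff lookup_single when_def)
lemma monoms_eq: "a \<in> monoms n \<Longrightarrow> b \<in> monoms n \<Longrightarrow> (\<forall>j<n. lookup a j = lookup b j) \<Longrightarrow> a = b"
  by (rule poly_mapping_eqI) (metis leI monoms_out)

lemma monoms_induct [consumes 1, case_names zero step]:
  assumes "d \<in> monoms n" and "P 0"
    and step: "\<And>d j. d \<in> monoms n \<Longrightarrow> j < n \<Longrightarrow> P d \<Longrightarrow> P (d + uvec j)"
  shows "P d"
proof -
  have "P d" if "d \<in> monoms n" "(\<Sum>j<n. lookup d j) = k" for k d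
    using that
  proof (induction k arbitrary: d)
    case 0
    then have "d = 0"
      by (intro monoms_eq) auto
    then show ?case using \<open>P 0\<close> by simp
  next
    case (Suc k)
    then obtain j where j: "j < n" "0 < lookup d j"
      by (metis lessThan_iff neq0_conv nat.distinct(1) sum.neutral)
    define d' where "d' = d - uvec j"
    have d: "d = d' + uvec j"
      using j by (intro poly_mapping_eqI) (auto simp: d'_def lookup_add lookup_minus lookup_single when_def)
    have "(\<Sum>i<n. lookup d i) = (\<Sum>i<n. lookup d' i) + (\<Sum>i<n. lookup (uvec j) i)"
      by (subst d) (simp add: lookup_add sum.distrib)
    also have "(\<Sum>i<n. lookup (uvec j) i) = 1"
      using j by (simp add: lookup_single when_def)
    finally have "(\<Sum>i<n. lookup d' i) = k" using Suc by simp
    moreover have "d' \<in> monoms n" using Suc by (simp add: d'_def)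
    ultimately show ?case using Suc.IH step j(1) d by metis
  qed
  then show ?thesis using assms(1) by blast
qed

lemma finite_box: "finite {g \<in> monoms n. \<forall>j<n. lookup g j < M}"
proof (rule finite_subset)
  show "{g \<in> monoms n. \<forall>j<n. lookup g j < M}
          \<subseteq> (\<lambda>f. \<Sum>j<n. single j (f j)) ` PiE {..<n} (\<lambda>_. {..<M})"
  proof
    fix g assume g: "g \<in> {g \<in> monoms n. \<forall>j<n. lookup g j < M}"
    have "g = (\<Sum>j<n. single j (restrict (lookup g) {..<n} j))"
      using g monoms_out[of g n]
      by (intro poly_mapping_eqI) (auto simp: lookup_sum lookup_single when_def sum.delta)
    moreover have "restrict (lookup g) {..<n} \<in> PiE {..<n} (\<lambda>_. {..<M})" using g by auto
    ultimately show "g \<in> (\<lambda>f. \<Sum>j<n. single j (f j)) ` PiE {..<n} (\<lambda>_. {..<M})" by blast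
  qed
qed (auto intro: finite_PiE)

lemma finite_monoms_bounded:
  fixes B :: "(nat \<Rightarrow>\<^sub>0 nat) set"
  assumes "finite B"
  obtains M where "\<And>g j. g \<in> B \<Longrightarrow> j < n \<Longrightarrow> lookup g j < M"
proof -
  have "finite ((\<lambda>(g, j). lookup g j) ` (B \<times> {..<n}))"
    using assms by (intro finite_imageI finite_cartesian_product) simp_all
  then obtain M where "\<forall>m \<in> (\<lambda>(g, j). lookup g j) ` (B \<times> {..<n}). m < M"
    using finite_nat_set_iff_bounded by blast
  then show ?thesis by (intro that[of M]) force
qed

lemma Pn_zero [simp]: "0 \<in> Pn n"
  by (simp add: Pn_def)
lemma Pn_add [simp]: "p \<in> Pn n \<Longrightarrow> q \<in> Pn n \<Longrightarrow> p + q \<in> Pn n"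
  using keys_add[of p q] by (auto simp: Pn_def)
lemma Pn_smul [simp]: "p \<in> Pn n \<Longrightarrow> smul c p \<in> Pn n"
  using keys_smul[of c p] by (auto simp: Pn_def)
lemma Pn_uminus [simp]: "p \<in> Pn n \<Longrightarrow> - p \<in> Pn n"
  by (simp add: Pn_def)
lemma Pn_diff [simp]: "p \<in> Pn n \<Longrightarrow> q \<in> Pn n \<Longrightarrow> p - q \<in> Pn n"
  by (metis Pn_add Pn_uminus diff_conv_add_uminus)
lemma Pn_single [simp]: "a \<in> monoms n \<Longrightarrow> single a c \<in> Pn n"
  by (simp add: Pn_def)
lemma Pn_sum: "(\<And>x. x \<in> A \<Longrightarrow> f x \<in> Pn n) \<Longrightarrow> sum f A \<in> Pn n"
  by (induction A rule: infinite_finite_induct) auto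
lemma Pn_mult [simp]: "p \<in> Pn n \<Longrightarrow> q \<in> Pn n \<Longrightarrow> p * q \<in> Pn n"
  using keys_mult[of p q] by (fastforce simp: Pn_def)
lemma Pn_keys: "p \<in> Pn n \<Longrightarrow> a \<in> keys p \<Longrightarrow> a \<in> monoms n"
  by (auto simp: Pn_def)

lemma xpow_dvd:
  assumes R: "R \<in> Pn n" and dom: "\<And>b k. b \<in> keys R \<Longrightarrow> lookup d k \<le> lookup b k"
  obtains U where "U \<in> Pn n" "R = xpow d * U"
proof
  define U where "U = (\<Sum>b\<in>keys R. single (b - d) (lookup R b))"
  show "U \<in> Pn n"
    unfolding U_def using R by (intro Pn_sum) (auto dest: Pn_keys)
  have "xpow d * U = (\<Sum>b\<in>keys R. single (d + (b - d)) (lookup R b))"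
    by (simp add: U_def sum_distrib_left mult_single)
  also have "\<dots> = (\<Sum>b\<in>keys R. single b (lookup R b))"
  proof (rule sum.cong)
    fix b assume "b \<in> keys R"
    then have "d + (b - d) = b"
      using dom by (intro poly_mapping_eqI) (simp add: lookup_add lookup_minus)
    then show "single (d + (b - d)) (lookup R b) = single b (lookup R b)" by simp
  qed simp
  finally show "R = xpow d * U" by (simp add: poly_expand[symmetric])
qed

lemma EndKI:
  assumes "\<And>p. p \<in> Pn n \<Longrightarrow> \<phi> p \<in> Pn n"
    and "\<And>p q. p \<in> Pn n \<Longrightarrow> q \<in> Pn n \<Longrightarrow> \<phi> (p + q) = \<phi> p + \<phi> q"
    and "\<And>c p. p \<in> Pn n \<Longrightarrow> \<phi> (smul c p) = smul c (\<phi> p)"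
    and "\<And>p. p \<notin> Pn n \<Longrightarrow> \<phi> p = 0"
  shows "\<phi> \<in> EndK n"
  using assms by (simp add: EndK_def)

lemma EndK_in: "\<phi> \<in> EndK n \<Longrightarrow> p \<in> Pn n \<Longrightarrow> \<phi> p \<in> Pn n"
  by (simp add: EndK_def)
lemma EndK_add: "\<phi> \<in> EndK n \<Longrightarrow> p \<in> Pn n \<Longrightarrow> q \<in> Pn n \<Longrightarrow> \<phi> (p + q) = \<phi> p + \<phi> q"
  by (simp add: EndK_def)
lemma EndK_smul: "\<phi> \<in> EndK n \<Longrightarrow> p \<in> Pn n \<Longrightarrow> \<phi> (smul c p) = smul c (\<phi> p)"
  by (simp add: EndK_def)
lemma EndK_out: "\<phi> \<in> EndK n \<Longrightarrow> p \<notin> Pn n \<Longrightarrow> \<phi> p = 0"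
  by (simp add: EndK_def)
lemma EndK_zero: "\<phi> \<in> EndK n \<Longrightarrow> \<phi> 0 = 0"
  using EndK_smul[of \<phi> n 0 0] by simp
lemma EndK_in_xpow: "\<phi> \<in> EndK n \<Longrightarrow> g \<in> monoms n \<Longrightarrow> \<phi> (xpow g) \<in> Pn n"
  by (simp add: EndK_in)

lemma EndK_diff: "\<phi> \<in> EndK n \<Longrightarrow> p \<in> Pn n \<Longrightarrow> q \<in> Pn n \<Longrightarrow> \<phi> (p - q) = \<phi> p - \<phi> q"
  using EndK_add[of \<phi> n p "smul (-1) q"] EndK_smul[of \<phi> n q "-1"]
  by (simp add: smul_minus_one)

lemma EndK_sum:
  "\<phi> \<in> EndK n \<Longrightarrow> (\<And>x. x \<in> A \<Longrightarrow> f x \<in> Pn n) \<Longrightarrow> \<phi> (sum f A) = (\<Sum>x\<in>A. \<phi> (f x))"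
  by (induction A rule: infinite_finite_induct) (simp_all add: EndK_zero EndK_add Pn_sum)

lemma EndK_expand:
  assumes \<phi>: "\<phi> \<in> EndK n" and p: "p \<in> Pn n"
  shows "\<phi> p = (\<Sum>g\<in>keys p. smul (lookup p g) (\<phi> (xpow g)))"
proof -
  have "\<phi> p = \<phi> (\<Sum>g\<in>keys p. single g (lookup p g))"
    by (simp flip: poly_expand)
  also have "\<dots> = (\<Sum>g\<in>keys p. \<phi> (single g (lookup p g)))"
    using p by (intro EndK_sum[OF \<phi>]) (auto dest: Pn_keys)
  also have "\<dots> = (\<Sum>g\<in>keys p. smul (lookup p g) (\<phi> (xpow g)))"
    using p by (intro sum.cong refl) (metis EndK_smul[OF \<phi>] Pn_keys Pn_single smul_single mult_1_right)
  finally show ?thesis .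
qed

lemma EndK_ext:
  assumes "\<phi> \<in> EndK n" "\<chi> \<in> EndK n" and "\<And>g. g \<in> monoms n \<Longrightarrow> \<phi> (xpow g) = \<chi> (xpow g)"
  shows "\<phi> = \<chi>"
proof
  fix p show "\<phi> p = \<chi> p"
  proof (cases "p \<in> Pn n")
    case True
    have "\<phi> p = (\<Sum>g\<in>keys p. smul (lookup p g) (\<phi> (xpow g)))"
      using assms(1) True by (rule EndK_expand)
    also have "\<dots> = (\<Sum>g\<in>keys p. smul (lookup p g) (\<chi> (xpow g)))"
      using True assms(3) by (intro sum.cong) (auto dest: Pn_keys)
    also have "\<dots> = \<chi> p"
      using assms(2) True by (rule EndK_expand[symmetric])
    finally show ?thesis .
  qed (use assms in \<open>simp add: EndK_out\<close>)
qed

lemma EndK_restr: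
  assumes "\<And>p. p \<in> Pn n \<Longrightarrow> f p \<in> Pn n"
    and "\<And>p q. p \<in> Pn n \<Longrightarrow> q \<in> Pn n \<Longrightarrow> f (p + q) = f p + f q"
    and "\<And>c p. p \<in> Pn n \<Longrightarrow> f (smul c p) = smul c (f p)"
  shows "restr n f \<in> EndK n"
  unfolding restr_def by (rule EndKI) (use assms in auto)

lemma EndK_op_add: "f \<in> EndK n \<Longrightarrow> g \<in> EndK n \<Longrightarrow> op_add f g \<in> EndK n"
  by (rule EndKI) (auto simp: op_add_def EndK_in EndK_add EndK_smul EndK_out smul_add)
lemma EndK_op_diff: "f \<in> EndK n \<Longrightarrow> g \<in> EndK n \<Longrightarrow> op_diff f g \<in> EndK n"
  by (rule EndKI) (auto simp: op_diff_def EndK_in EndK_add EndK_smul EndK_out smul_diff)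
lemma EndK_op_smul: "f \<in> EndK n \<Longrightarrow> op_smul c f \<in> EndK n"
  by (rule EndKI) (auto simp: op_smul_def EndK_in EndK_add EndK_smul EndK_out smul_add smul_smul mult.commute)
lemma EndK_comp: "f \<in> EndK n \<Longrightarrow> g \<in> EndK n \<Longrightarrow> f \<circ> g \<in> EndK n"
  by (rule EndKI) (auto simp: EndK_in EndK_add EndK_smul EndK_out EndK_zero)
lemma EndK_funpow: "f \<in> EndK n \<Longrightarrow> g \<in> EndK n \<Longrightarrow> (f ^^ k) \<circ> g \<in> EndK n"
  by (induction k) (simp_all add: EndK_comp comp_assoc)

lemma EndK_sum_ops:
  assumes "\<And>s. s \<in> S \<Longrightarrow> F s \<in> EndK n"
  shows "(\<lambda>p. \<Sum>s\<in>S. F s p) \<in> EndK n"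
proof (rule EndKI)
  show "(\<Sum>s\<in>S. F s (p + q)) = (\<Sum>s\<in>S. F s p) + (\<Sum>s\<in>S. F s q)" if "p \<in> Pn n" "q \<in> Pn n" for p q
    unfolding sum.distrib[symmetric] using that by (intro sum.cong refl) (simp add: EndK_add[OF assms])
  show "(\<Sum>s\<in>S. F s (smul c p)) = smul c (\<Sum>s\<in>S. F s p)" if "p \<in> Pn n" for c p
    unfolding smul_sum using that by (intro sum.cong refl) (simp add: EndK_smul[OF assms])
  show "(\<Sum>s\<in>S. F s p) = 0" if "p \<notin> Pn n" for p
    using that by (intro sum.neutral) (simp add: EndK_out[OF assms])
qed (use assms in \<open>simp add: EndK_in Pn_sum\<close>)

lemma EndK_idop: "idop n \<in> EndK n"
  unfolding idop_def by (rule EndK_restr) auto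
lemma EndK_mult_op: "a \<in> Pn n \<Longrightarrow> mult_op n a \<in> EndK n"
  unfolding mult_op_def by (rule EndK_restr) (auto simp: distrib_left smul_mult)
lemma EndK_xop: "i < n \<Longrightarrow> xop n i \<in> EndK n"
  unfolding xop_def by (rule EndK_mult_op) simp

lemma idop_xpow [simp]: "g \<in> monoms n \<Longrightarrow> idop n (xpow g) = xpow g"
  by (simp add: idop_def restr_def)
lemma mult_op_xpow: "g \<in> monoms n \<Longrightarrow> mult_op n a (xpow g) = a * xpow g"
  by (simp add: mult_op_def restr_def)
lemma xop_in: "p \<in> Pn n \<Longrightarrow> xop n i p = xpow (uvec i) * p"
  by (simp add: xop_def mult_op_def restr_def)
lemma xop_xpow: "g \<in> monoms n \<Longrightarrow> xop n i (xpow g) = xpow (g + uvec i)"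
  by (simp add: xop_in xpow_mult add.commute)

definition y_term :: "nat \<Rightarrow> (nat \<Rightarrow>\<^sub>0 nat) \<Rightarrow> 'k::field_char_0 \<Rightarrow> 'k pol" where
  "y_term i a c = (if 0 < lookup a i then single (a - uvec i) c else 0)"

lemma yop_y_term: "yop n i = restr n (\<lambda>q. \<Sum>a\<in>keys q. y_term i a (lookup q a))"
  by (simp add: yop_def y_term_def)

lemma sum_y_term_superset:
  "finite A \<Longrightarrow> keys q \<subseteq> A \<Longrightarrow> (\<Sum>a\<in>keys q. y_term i a (lookup q a)) = (\<Sum>a\<in>A. y_term i a (lookup q a))"
  by (rule sum.mono_neutral_left) (auto simp: y_term_def in_keys_iff)

lemma EndK_yop: "yop n i \<in> EndK n"
  unfolding yop_y_term
proof (rule EndK_restr)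
  fix p :: "'a pol" assume "p \<in> Pn n"
  then show "(\<Sum>a\<in>keys p. y_term i a (lookup p a)) \<in> Pn n"
    by (auto simp: y_term_def intro!: Pn_sum dest: Pn_keys)
next
  fix p q :: "'a pol"
  let ?A = "keys p \<union> keys q" and ?Y = "\<lambda>r. \<Sum>a\<in>keys p \<union> keys q. y_term i a (lookup r a)"
  have "(\<Sum>a\<in>keys (p + q). y_term i a (lookup (p + q) a)) = ?Y (p + q)"
    using keys_add[of p q] by (intro sum_y_term_superset) auto
  also have "\<dots> = ?Y p + ?Y q"
    by (simp add: y_term_def lookup_add single_add sum.distrib[symmetric] if_distrib cong: if_cong)
  also have "\<dots> = (\<Sum>a\<in>keys p. y_term i a (lookup p a)) + (\<Sum>a\<in>keys q. y_term i a (lookup q a))"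
    using sum_y_term_superset[of ?A p i] sum_y_term_superset[of ?A q i] by simp
  finally show "(\<Sum>a\<in>keys (p + q). y_term i a (lookup (p + q) a))
      = (\<Sum>a\<in>keys p. y_term i a (lookup p a)) + (\<Sum>a\<in>keys q. y_term i a (lookup q a))" .
next
  fix c and p :: "'a pol"
  have "(\<Sum>a\<in>keys (smul c p). y_term i a (lookup (smul c p) a)) = (\<Sum>a\<in>keys p. y_term i a (lookup (smul c p) a))"
    using keys_smul[of c p] by (intro sum_y_term_superset) auto
  also have "\<dots> = (\<Sum>a\<in>keys p. smul c (y_term i a (lookup p a)))"
    by (rule sum.cong) (auto simp: y_term_def smul_single)
  finally show "(\<Sum>a\<in>keys (smul c p). y_term i a (lookup (smul c p) a)) = smul c (\<Sum>a\<in>keys p. y_term i a (lookup p a))"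
    by (simp add: smul_sum)
qed

lemma yop_xpow: "g \<in> monoms n \<Longrightarrow> yop n i (xpow g) = (if 0 < lookup g i then xpow (g - uvec i) else 0)"
  by (simp add: yop_y_term restr_def y_term_def)

lemma xpow_funpow: "g \<in> monoms n \<Longrightarrow> i < n \<Longrightarrow> (xop n i ^^ k) (xpow g) = xpow (g + single i k)"
  by (induction k) (simp_all add: xop_xpow add.assoc flip: single_add)

lemma xop_funpow_zero: "(xop n i ^^ k) 0 = 0"
  by (induction k) (simp_all add: xop_in)

lemma ypow_funpow:
  "g \<in> monoms n \<Longrightarrow> (yop n i ^^ l) (xpow g) = (if l \<le> lookup g i then xpow (g - single i l) else 0)"
proof (induction l)
  case (Suc l)
  have "g - single i l - uvec i = g - single i (Suc l)" if "Suc l \<le> lookup g i"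
    using that by (intro poly_mapping_eqI) (auto simp: lookup_minus lookup_single when_def)
  then show ?case
    using Suc EndK_zero[OF EndK_yop] by (auto simp: yop_xpow lookup_minus)
qed simp

lemma xy_funpow:
  assumes "g \<in> monoms n" "i < n"
  shows "((xop n i ^^ k) \<circ> (yop n i ^^ l) \<circ> idop n) (xpow g :: 'k::field_char_0 pol)
       = (if l \<le> lookup g i then xpow (g - single i l + single i k) else 0)"
  using assms by (simp add: ypow_funpow xpow_funpow xop_funpow_zero)

lemma E1_xpow:
  assumes g: "g \<in> monoms n" and i: "i < n"
  shows "E1 n k l i (xpow g :: 'k::field_char_0 pol)
       = (if lookup g i = l then xpow (g - single i l + single i k) else 0)"
proof -
  have shift: "g - single i (l + 1) + single i (k + 1) = g - single i l + single i k" if "l + 1 \<le> lookup g i"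
    using that by (intro poly_mapping_eqI) (auto simp: lookup_minus lookup_add lookup_single when_def)
  have "E1 n k l i (xpow g :: 'k pol)
      = (if l \<le> lookup g i then xpow (g - single i l + single i k) else 0)
      - (if l + 1 \<le> lookup g i then xpow (g - single i (l + 1) + single i (k + 1)) else 0)"
    unfolding E1_def op_diff_def xy_funpow[OF g i] by (rule refl)
  then show ?thesis using shift by auto
qed

lemma EndK_E1: "i < n \<Longrightarrow> E1 n k l i \<in> EndK n"
  unfolding E1_def comp_assoc by (intro EndK_op_diff EndK_funpow EndK_xop EndK_yop EndK_idop)

lemma Eab_partial_xpow:
  assumes "distinct L" "set L \<subseteq> {..<n}" "g \<in> monoms n"
  shows "\<exists>g'. g' \<in> monoms n \<and> (\<forall>j. lookup g' j = (if j \<in> set L then lookup a j else lookup g j)) \<and>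
     foldr (\<lambda>i f. E1 n (lookup a i) (lookup b i) i \<circ> f) L (idop n) (xpow g :: 'k::field_char_0 pol)
       = (if \<forall>j\<in>set L. lookup g j = lookup b j then xpow g' else 0)"
  using assms
proof (induction L)
  case Nil then show ?case by (intro exI[of _ g]) simp
next
  case (Cons i L)
  then have "distinct L" "set L \<subseteq> {..<n}" by auto
  then obtain g' where g': "g' \<in> monoms n" "\<forall>j. lookup g' j = (if j \<in> set L then lookup a j else lookup g j)"
    "foldr (\<lambda>i f. E1 n (lookup a i) (lookup b i) i \<circ> f) L (idop n) (xpow g :: 'k pol)
       = (if \<forall>j\<in>set L. lookup g j = lookup b j then xpow g' else 0)"
    using Cons.IH Cons.prems(3) by blast
  have i: "i < n" "i \<notin> set L" using Cons.prems by auto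
  then have g'i: "lookup g' i = lookup g i" using g'(2) by simp
  define g'' where "g'' = g' - single i (lookup g i) + single i (lookup a i)"
  have "\<forall>j. lookup g'' j = (if j \<in> set (i # L) then lookup a j else lookup g j)"
    using g'(2) i g'i by (auto simp: g''_def lookup_minus lookup_add lookup_single when_def)
  moreover have "g'' \<in> monoms n" using g'(1) i by (simp add: g''_def)
  moreover have "foldr (\<lambda>i f. E1 n (lookup a i) (lookup b i) i \<circ> f) (i # L) (idop n) (xpow g :: 'k pol)
       = (if \<forall>j\<in>set (i # L). lookup g j = lookup b j then xpow g'' else 0)"
  proof (cases "\<forall>j\<in>set L. lookup g j = lookup b j")
    case True
    then show ?thesis
      using g'(3) E1_xpow[OF g'(1) i(1), of "lookup a i" "lookup b i"] g'i by (auto simp: g''_def)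
  next
    case False
    have "foldr (\<lambda>i f. E1 n (lookup a i) (lookup b i) i \<circ> f) L (idop n) (xpow g :: 'k pol) = 0"
      using False g'(3) by auto
    then show ?thesis using False by (auto simp: EndK_zero[OF EndK_E1[OF i(1)]])
  qed
  ultimately show ?case by blast
qed

lemma Eab_xpow:
  assumes "a \<in> monoms n" "b \<in> monoms n" "g \<in> monoms n"
  shows "Eab n a b (xpow g :: 'k::field_char_0 pol) = (if g = b then xpow a else 0)"
proof -
  obtain g' where g': "g' \<in> monoms n" "\<forall>j. lookup g' j = (if j \<in> {..<n} then lookup a j else lookup g j)"
    "Eab n a b (xpow g :: 'k pol) = (if \<forall>j\<in>{..<n}. lookup g j = lookup b j then xpow g' else 0)"
    using Eab_partial_xpow[of "[0..<n]" n g a b] assms by (auto simp: Eab_def atLeast0LessThan)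
  have "g' = a" using g'(1,2) assms(1) by (intro monoms_eq) auto
  moreover have "(\<forall>j\<in>{..<n}. lookup g j = lookup b j) \<longleftrightarrow> g = b"
    using assms(2,3) monoms_eq[of g n b] by blast
  ultimately show ?thesis using g'(3) by simp
qed

lemma EndK_Eab: "Eab n a b \<in> EndK n"
proof -
  have "set L \<subseteq> {..<n} \<Longrightarrow> foldr (\<lambda>i f. E1 n (lookup a i) (lookup b i) i \<circ> f) L (idop n) \<in> EndK n" for L
    by (induction L) (auto intro: EndK_idop EndK_comp EndK_E1)
  from this[of "[0..<n]"] show ?thesis unfolding Eab_def by (simp add: atLeast0LessThan)
qed

lemma EndK_Eab_combination: "(\<lambda>p. \<Sum>ab\<in>S. smul (c ab) (Eab n (fst ab) (snd ab) p)) \<in> EndK n"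
proof -
  have "(\<lambda>p. \<Sum>ab\<in>S. op_smul (c ab) (Eab n (fst ab) (snd ab)) p) \<in> EndK n"
    by (rule EndK_sum_ops) (intro EndK_op_smul EndK_Eab)
  then show ?thesis unfolding op_smul_def .
qed

section \<open>\<open>F\<^sub>n\<close> as the endomorphisms of finite support\<close>

definition finitely_supported :: "nat \<Rightarrow> ('k::field_char_0 pol \<Rightarrow> 'k pol) \<Rightarrow> bool" where
  "finitely_supported n \<psi> \<longleftrightarrow> finite {g \<in> monoms n. \<psi> (xpow g) \<noteq> 0}"

lemma finitely_supportedI:
  "finite C \<Longrightarrow> (\<And>g. g \<in> monoms n \<Longrightarrow> g \<notin> C \<Longrightarrow> \<psi> (xpow g) = 0) \<Longrightarrow> finitely_supported n \<psi>"
  unfolding finitely_supported_def by (rule finite_subset[rotated]) auto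

text \<open>Every finitely supported endomorphism is the finite combination of matrix units read off
  from its values on the monomials of its support.\<close>
lemma Fn_intro:
  assumes \<psi>: "\<psi> \<in> EndK n" and fin: "finitely_supported n \<psi>"
  shows "\<psi> \<in> Fn n"
proof -
  define C where "C = {g \<in> monoms n. \<psi> (xpow g) \<noteq> 0}"
  define S where "S = (\<Union>g\<in>C. (\<lambda>a. (a, g)) ` keys (\<psi> (xpow g)))"
  define c where "c ab = lookup (\<psi> (xpow (snd ab))) (fst ab)" for ab
  define F where "F = (\<lambda>p. \<Sum>ab\<in>S. smul (c ab) (Eab n (fst ab) (snd ab) p))"
  have S: "finite S" "S \<subseteq> monoms n \<times> monoms n"
    using fin \<psi> by (auto simp: S_def C_def finitely_supported_def dest: Pn_keys[OF EndK_in_xpow])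
  have "F \<in> EndK n"
    unfolding F_def by (rule EndK_Eab_combination)
  have "\<psi> = F"
  proof (rule EndK_ext[OF \<psi> \<open>F \<in> EndK n\<close>])
    fix g assume g: "g \<in> monoms n"
    show "\<psi> (xpow g) = F (xpow g)"
    proof (rule poly_mapping_eqI)
      fix b
      have "lookup (F (xpow g)) b = (\<Sum>ab\<in>S. if ab = (b, g) then c ab else 0)"
        unfolding F_def lookup_sum
      proof (intro sum.cong refl)
        fix ab assume "ab \<in> S"
        then have "fst ab \<in> monoms n" "snd ab \<in> monoms n" using S(2) by auto
        with g show "lookup (smul (c ab) (Eab n (fst ab) (snd ab) (xpow g))) b
            = (if ab = (b, g) then c ab else 0)"
          by (cases ab) (auto simp: Eab_xpow lookup_single when_def)
      qed
      also have "\<dots> = (if (b, g) \<in> S then c (b, g) else 0)"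
        using S(1) by (simp add: sum.delta')
      also have "\<dots> = lookup (\<psi> (xpow g)) b"
      proof -
        have "(b, g) \<in> S \<longleftrightarrow> g \<in> C \<and> b \<in> keys (\<psi> (xpow g))" unfolding S_def by blast
        then show ?thesis using g by (auto simp: C_def c_def in_keys_iff)
      qed
      finally show "lookup (\<psi> (xpow g)) b = lookup (F (xpow g)) b" by simp
    qed
  qed
  then show ?thesis unfolding Fn_def F_def using S by blast
qed

lemma Fn_iff: "\<psi> \<in> Fn n \<longleftrightarrow> \<psi> \<in> EndK n \<and> finitely_supported n \<psi>"
proof
  assume "\<psi> \<in> Fn n"
  then obtain S c where \<psi>: "\<psi> = (\<lambda>p. \<Sum>ab\<in>S. smul (c ab) (Eab n (fst ab) (snd ab) p))"
    and S: "finite S" "S \<subseteq> monoms n \<times> monoms n"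
    unfolding Fn_def by blast
  have "\<psi> \<in> EndK n"
    unfolding \<psi> by (rule EndK_Eab_combination)
  moreover have "finitely_supported n \<psi>"
  proof (rule finitely_supportedI[of "snd ` S"])
    fix g assume g: "g \<in> monoms n" "g \<notin> snd ` S"
    show "\<psi> (xpow g) = 0" unfolding \<psi>
    proof (intro sum.neutral ballI)
      fix ab assume "ab \<in> S"
      then have "fst ab \<in> monoms n" "snd ab \<in> monoms n" "snd ab \<noteq> g" using S(2) g by force+
      then show "smul (c ab) (Eab n (fst ab) (snd ab) (xpow g)) = 0" using g by (simp add: Eab_xpow)
    qed
  qed (use S in simp)
  ultimately show "\<psi> \<in> EndK n \<and> finitely_supported n \<psi>" ..
qed (blast intro: Fn_intro)

lemma diff_in_Fn:
  assumes "\<phi> \<in> EndK n" "\<chi> \<in> EndK n" "finite B"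
    and "\<And>g. g \<in> monoms n \<Longrightarrow> g \<notin> B \<Longrightarrow> \<phi> (xpow g) = \<chi> (xpow g)"
  shows "op_diff \<phi> \<chi> \<in> Fn n"
  unfolding Fn_iff using assms
  by (intro conjI EndK_op_diff finitely_supportedI[of B]) (auto simp: op_diff_def)

lemma Fn_add:
  assumes "\<psi>\<^sub>1 \<in> Fn n" "\<psi>\<^sub>2 \<in> Fn n"
  shows "op_add \<psi>\<^sub>1 \<psi>\<^sub>2 \<in> Fn n"
proof -
  have "{g \<in> monoms n. op_add \<psi>\<^sub>1 \<psi>\<^sub>2 (xpow g) \<noteq> 0}
      \<subseteq> {g \<in> monoms n. \<psi>\<^sub>1 (xpow g) \<noteq> 0} \<union> {g \<in> monoms n. \<psi>\<^sub>2 (xpow g) \<noteq> 0}"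
    by (auto simp: op_add_def)
  then show ?thesis
    using assms unfolding Fn_iff finitely_supported_def by (meson EndK_op_add finite_UnI finite_subset)
qed

lemma Fn_smul:
  assumes "\<psi> \<in> Fn n"
  shows "op_smul c \<psi> \<in> Fn n"
proof -
  have "{g \<in> monoms n. op_smul c \<psi> (xpow g) \<noteq> 0} \<subseteq> {g \<in> monoms n. \<psi> (xpow g) \<noteq> 0}"
    by (auto simp: op_smul_def)
  then show ?thesis
    using assms unfolding Fn_iff finitely_supported_def by (meson EndK_op_smul finite_subset)
qed

lemma Fn_comp_left:
  assumes "\<phi> \<in> EndK n" "\<psi> \<in> Fn n"
  shows "\<phi> \<circ> \<psi> \<in> Fn n"
proof -
  have "{g \<in> monoms n. (\<phi> \<circ> \<psi>) (xpow g) \<noteq> 0} \<subseteq> {g \<in> monoms n. \<psi> (xpow g) \<noteq> 0}"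
    using EndK_zero[OF assms(1)] by auto
  then show ?thesis
    using assms unfolding Fn_iff finitely_supported_def by (meson EndK_comp finite_subset)
qed

definition finite_rows :: "nat \<Rightarrow> ('k::field_char_0 pol \<Rightarrow> 'k pol) \<Rightarrow> bool" where
  "finite_rows n f \<longleftrightarrow> (\<forall>b. finite {g \<in> monoms n. b \<in> keys (f (xpow g))})"

lemma Fn_comp_right:
  assumes \<psi>: "\<psi> \<in> Fn n" and \<chi>: "\<chi> \<in> EndK n" "finite_rows n \<chi>"
  shows "\<psi> \<circ> \<chi> \<in> Fn n"
proof -
  define C where "C = {g \<in> monoms n. \<psi> (xpow g) \<noteq> 0}"
  have "finite C" "\<psi> \<in> EndK n" using \<psi> by (simp_all add: C_def Fn_iff finitely_supported_def)
  show ?thesis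
    unfolding Fn_iff
  proof (intro conjI EndK_comp \<open>\<psi> \<in> EndK n\<close> \<chi>(1) finitely_supportedI)
    show "finite (\<Union>b\<in>C. {g \<in> monoms n. b \<in> keys (\<chi> (xpow g))})"
      using \<open>finite C\<close> \<chi>(2) unfolding finite_rows_def by blast
    fix g assume g: "g \<in> monoms n" "g \<notin> (\<Union>b\<in>C. {g \<in> monoms n. b \<in> keys (\<chi> (xpow g))})"
    have "(\<psi> \<circ> \<chi>) (xpow g) = (\<Sum>a\<in>keys (\<chi> (xpow g)). smul (lookup (\<chi> (xpow g)) a) (\<psi> (xpow a)))"
      using EndK_expand[OF \<open>\<psi> \<in> EndK n\<close> EndK_in_xpow[OF \<chi>(1) g(1)]] by simp
    also have "\<dots> = 0"
      using g EndK_in_xpow[OF \<chi>(1) g(1)] by (intro sum.neutral) (auto simp: C_def dest: Pn_keys)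
    finally show "(\<psi> \<circ> \<chi>) (xpow g) = 0" .
  qed
qed

lemma commut_EndK: "a \<in> EndK n \<Longrightarrow> \<phi> \<in> EndK n \<Longrightarrow> commut a \<phi> \<in> EndK n"
  unfolding commut_def by (intro EndK_op_diff EndK_comp)

lemma commut_xop_xpow:
  assumes "\<phi> \<in> EndK n" "g \<in> monoms n"
  shows "commut (xop n i) \<phi> (xpow g) = xpow (uvec i) * \<phi> (xpow g) - \<phi> (xpow (g + uvec i))"
  using assms by (simp add: commut_def op_diff_def xop_xpow xop_in[OF EndK_in_xpow[OF assms]])

lemma commut_xop_in_Fn_iff:
  assumes "\<phi> \<in> EndK n" "i < n"
  shows "commut (xop n i) \<phi> \<in> Fn n
     \<longleftrightarrow> finite {g \<in> monoms n. \<phi> (xpow (g + uvec i)) \<noteq> xpow (uvec i) * \<phi> (xpow g)}"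
proof -
  have "{g \<in> monoms n. commut (xop n i) \<phi> (xpow g) \<noteq> 0}
      = {g \<in> monoms n. \<phi> (xpow (g + uvec i)) \<noteq> xpow (uvec i) * \<phi> (xpow g)}"
    using assms(1) by (auto simp: commut_xop_xpow)
  then show ?thesis
    using assms by (simp add: Fn_iff finitely_supported_def commut_EndK EndK_xop)
qed

lemma commut_xop_in_FnI:
  assumes "\<phi> \<in> EndK n" "i < n" "finite B"
    and "\<And>g. g \<in> monoms n \<Longrightarrow> g \<notin> B \<Longrightarrow> \<phi> (xpow (g + uvec i)) = xpow (uvec i) * \<phi> (xpow g)"
  shows "commut (xop n i) \<phi> \<in> Fn n"
proof -
  have "{g \<in> monoms n. \<phi> (xpow (g + uvec i)) \<noteq> xpow (uvec i) * \<phi> (xpow g)} \<subseteq> B"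
    using assms(4) by blast
  then show ?thesis
    using commut_xop_in_Fn_iff[OF assms(1,2)] finite_subset[OF _ assms(3)] by blast
qed

section \<open>Endomorphisms commuting with the variables modulo \<open>F\<^sub>n\<close>\<close>

lemma eventually_multiplicative:
  assumes \<phi>: "\<phi> \<in> EndK n" and comm: "\<forall>i<n. commut (xop n i) \<phi> \<in> Fn n"
  obtains M where "\<And>g d. g \<in> monoms n \<Longrightarrow> d \<in> monoms n \<Longrightarrow> \<exists>j<n. M \<le> lookup g j
      \<Longrightarrow> \<phi> (xpow (g + d)) = xpow d * \<phi> (xpow g)"
proof -
  define B where "B = (\<Union>i<n. {g \<in> monoms n. \<phi> (xpow (g + uvec i)) \<noteq> xpow (uvec i) * \<phi> (xpow g)})"
  have "finite B"
    using comm commut_xop_in_Fn_iff[OF \<phi>] by (simp add: B_def)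
  then obtain M where M: "\<And>g j. g \<in> B \<Longrightarrow> j < n \<Longrightarrow> lookup g j < M"
    using finite_monoms_bounded by blast
  have shift_one: "\<phi> (xpow (g + uvec i)) = xpow (uvec i) * \<phi> (xpow g)"
    if "g \<in> monoms n" "i < n" "\<exists>j<n. M \<le> lookup g j" for g i
    using that M[of g] by (auto simp: B_def not_less[symmetric])
  have "\<phi> (xpow (g + d)) = xpow d * \<phi> (xpow g)"
    if g: "g \<in> monoms n" "\<exists>j<n. M \<le> lookup g j" and d: "d \<in> monoms n" for g d
    using d
  proof (induction rule: monoms_induct)
    case zero show ?case by simp
  next
    case (step d j)
    have "\<exists>j<n. M \<le> lookup (g + d) j" using g(2) by (auto simp: lookup_add intro: le_add1 order_trans)
    then have "\<phi> (xpow ((g + d) + uvec j)) = xpow (uvec j) * \<phi> (xpow (g + d))"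
      using g(1) step by (intro shift_one) simp_all
    then show ?case
      using step.IH by (simp add: add.assoc xpow_mult[symmetric] ac_simps)
  qed
  then show ?thesis using that by blast
qed

lemma PplusF_commut:
  assumes "\<phi> \<in> PplusF n"
  shows "\<phi> \<in> EndK n" "\<forall>i<n. commut (xop n i) \<phi> \<in> Fn n"
proof -
  obtain a f where a: "a \<in> Pn n" and f: "f \<in> Fn n" and \<phi>: "\<phi> = op_add (mult_op n a) f"
    using assms unfolding PplusF_def by blast
  define C where "C = {g \<in> monoms n. f (xpow g) \<noteq> 0}"
  have "finite C" using f by (simp add: C_def Fn_iff finitely_supported_def)
  show E: "\<phi> \<in> EndK n" unfolding \<phi> using f by (intro EndK_op_add EndK_mult_op a) (simp add: Fn_iff)
  show "\<forall>i<n. commut (xop n i) \<phi> \<in> Fn n"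
  proof (intro allI impI)
    fix i assume i: "i < n"
    have "\<phi> (xpow (g + uvec i)) = xpow (uvec i) * \<phi> (xpow g)"
      if g: "g \<in> monoms n" "g \<notin> C" "g + uvec i \<notin> C" for g
    proof -
      have "\<phi> (xpow (g + uvec i)) = a * xpow (g + uvec i)"
        using g i by (simp add: C_def \<phi> op_add_def mult_op_xpow)
      also have "\<dots> = xpow (uvec i) * (a * xpow g)"
        by (simp add: xpow_mult[symmetric] ac_simps)
      also have "\<dots> = xpow (uvec i) * \<phi> (xpow g)"
        using g by (simp add: C_def \<phi> op_add_def mult_op_xpow)
      finally show ?thesis .
    qed
    then have "{g \<in> monoms n. \<phi> (xpow (g + uvec i)) \<noteq> xpow (uvec i) * \<phi> (xpow g)}
        \<subseteq> C \<union> (\<lambda>g. g + uvec i) -` C"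
      by blast
    moreover have "finite ((\<lambda>g. g + uvec i) -` C)"
      using \<open>finite C\<close> by (rule finite_vimageI) (simp add: inj_on_def)
    ultimately show "commut (xop n i) \<phi> \<in> Fn n"
      using commut_xop_in_Fn_iff[OF E i] \<open>finite C\<close> by (meson finite_UnI finite_subset)
  qed
qed

section \<open>The case \<open>n \<ge> 2\<close>\<close>

text \<open>With two variables available, \<open>\<phi>(x\<^sup>M\<^sup>\<dots>\<^sup>M)\<close> is divisible by \<open>x\<^sup>M\<^sup>\<dots>\<^sup>M\<close>: moving all but one
  exponent out of the argument shows each exponent of each term is at least \<open>M\<close>.  The quotient
  \<open>U\<close> then represents \<open>\<phi>\<close> outside the box of exponents below \<open>M\<close>.\<close>
lemma commut_condition_PplusF:
  assumes n: "2 \<le> n" and \<phi>: "\<phi> \<in> EndK n" and comm: "\<forall>i<n. commut (xop n i) \<phi> \<in> Fn n"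
  shows "\<phi> \<in> PplusF n"
proof -
  obtain M where mult: "\<And>g d. g \<in> monoms n \<Longrightarrow> d \<in> monoms n \<Longrightarrow> \<exists>j<n. M \<le> lookup g j
      \<Longrightarrow> \<phi> (xpow (g + d)) = xpow d * \<phi> (xpow g)"
    using eventually_multiplicative[OF \<phi> comm] by blast
  define D where "D = (\<Sum>j<n. single j M)"
  have D: "D \<in> monoms n" "\<And>k. lookup D k = (if k < n then M else 0)"
    by (simp_all add: D_def monoms_iff lookup_sum lookup_single when_def)
  define R where "R = \<phi> (xpow D)"
  have dom: "lookup D k \<le> lookup b k" if b: "b \<in> keys R" for b k
  proof (cases "k < n")
    case True
    define j where "j = (if k = 0 then 1 else (0::nat))"
    have j: "j < n" "j \<noteq> k" using n by (auto simp: j_def)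
    have "single j M + (D - single j M) = D"
      using D(2) j(1) by (intro poly_mapping_eqI) (auto simp: lookup_add lookup_minus lookup_single when_def)
    then have "R = xpow (D - single j M) * \<phi> (xpow (single j M))"
      unfolding R_def using mult[of "single j M" "D - single j M"] j D(1)
      by (metis lookup_single_eq monoms_minus monoms_single order_refl)
    then have "lookup (D - single j M) k \<le> lookup b k" using b keys_xpow_mult by metis
    then show ?thesis using j D(2) by (simp add: lookup_minus lookup_single)
  qed (simp add: D(2))
  have "R \<in> Pn n" using \<phi> D(1) by (simp add: R_def EndK_in)
  then obtain U where U: "U \<in> Pn n" "R = xpow D * U"
    using dom by (rule xpow_dvd)
  have agree: "\<phi> (xpow g) = mult_op n U (xpow g)"
    if g: "g \<in> monoms n" "\<exists>j<n. M \<le> lookup g j" for g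
  proof -
    have D_large: "\<exists>j<n. M \<le> lookup D j" using n D(2) by (intro exI[of _ 0]) simp
    have "xpow D * \<phi> (xpow g) = \<phi> (xpow (D + g))"
      using mult[OF g(1) D(1) g(2)] by (simp add: add.commute)
    also have "\<dots> = xpow D * (U * xpow g)"
      using mult[OF D(1) g(1) D_large] U(2) by (simp add: R_def ac_simps)
    finally have "\<phi> (xpow g) = U * xpow g" by (rule xpow_cancel)
    then show ?thesis using g(1) by (simp add: mult_op_xpow)
  qed
  have "op_diff \<phi> (mult_op n U) \<in> Fn n"
    using agree by (intro diff_in_Fn[OF \<phi> EndK_mult_op[OF U(1)] finite_box[of n M]]) (auto simp: not_less)
  moreover have "\<phi> = op_add (mult_op n U) (op_diff \<phi> (mult_op n U))"
    by (simp add: op_add_def op_diff_def)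
  ultimately show ?thesis unfolding PplusF_def using U(1) by blast
qed

section \<open>The algebra \<open>\<SS>\<^sub>n\<close> of one-sided inverses\<close>

lemma Sn_EndK: "f \<in> Sn n \<Longrightarrow> f \<in> EndK n"
  by (induction rule: Sn.induct)
    (blast intro: EndK_idop EndK_xop EndK_yop EndK_op_add EndK_op_smul EndK_comp)+

lemma Sn_sum:
  assumes "finite S" "\<And>s. s \<in> S \<Longrightarrow> F s \<in> Sn n"
  shows "(\<lambda>p. \<Sum>s\<in>S. F s p) \<in> Sn n"
  using assms
proof (induction S rule: finite_induct)
  case empty
  have "(\<lambda>p. \<Sum>s\<in>{}. F s p) = op_smul 0 (idop n)" by (simp add: op_smul_def fun_eq_iff)
  then show ?case by (simp add: Sn.S_smul Sn.S_one)
next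
  case (insert x S)
  then have "op_add (F x) (\<lambda>p. \<Sum>s\<in>S. F s p) \<in> Sn n" by (intro Sn.S_add) auto
  then show ?case using insert(1,2) by (simp add: op_add_def)
qed

lemma Sn_funpow: "f \<in> Sn n \<Longrightarrow> g \<in> Sn n \<Longrightarrow> (f ^^ k) \<circ> g \<in> Sn n"
  by (induction k) (simp_all add: Sn.S_comp comp_assoc)

lemma Sn_diff: "f \<in> Sn n \<Longrightarrow> g \<in> Sn n \<Longrightarrow> op_diff f g \<in> Sn n"
proof -
  assume "f \<in> Sn n" "g \<in> Sn n"
  moreover have "op_diff f g = op_add f (op_smul (-1) g)"
    by (simp add: op_diff_def op_add_def op_smul_def smul_minus_one fun_eq_iff)
  ultimately show ?thesis by (simp add: Sn.S_add Sn.S_smul)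
qed

lemma Fn_Sn: "\<psi> \<in> Fn n \<Longrightarrow> \<psi> \<in> Sn n"
proof -
  have E1: "E1 n k l i \<in> Sn n" if "i < n" for k l i
    unfolding E1_def comp_assoc using that by (intro Sn_diff Sn_funpow Sn.S_x Sn.S_y Sn.S_one)
  have "set L \<subseteq> {..<n} \<Longrightarrow> foldr (\<lambda>i f. E1 n (lookup a i) (lookup b i) i \<circ> f) L (idop n) \<in> Sn n"
    for L a b by (induction L) (auto intro: Sn.S_one Sn.S_comp E1)
  from this[of "[0..<n]"] have Eab: "Eab n a b \<in> Sn n" for a b unfolding Eab_def by (simp add: atLeast0LessThan)
  assume "\<psi> \<in> Fn n"
  then obtain S c where "\<psi> = (\<lambda>p. \<Sum>ab\<in>S. op_smul (c ab) (Eab n (fst ab) (snd ab)) p)" "finite S"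
    unfolding Fn_def op_smul_def by blast
  then show ?thesis by (simp add: Sn_sum Sn.S_smul Eab)
qed

lemma finite_rowsI:
  assumes "\<And>b. \<exists>F. finite F \<and> {g \<in> monoms n. b \<in> keys (f (xpow g))} \<subseteq> F"
  shows "finite_rows n f"
  using assms unfolding finite_rows_def by (meson finite_subset)

lemma finite_rows_idop: "finite_rows n (idop n)"
  by (rule finite_rowsI, rule_tac x="{b}" in exI) auto

lemma finite_rows_xop: "finite_rows n (xop n i)"
proof (rule finite_rowsI)
  fix b
  have "finite ((\<lambda>g. g + uvec i) -` {b})" by (rule finite_vimageI) (auto simp: inj_on_def)
  moreover have "{g \<in> monoms n. b \<in> keys (xop n i (xpow g))} \<subseteq> (\<lambda>g. g + uvec i) -` {b}"
    by (auto simp: xop_xpow)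
  ultimately show "\<exists>F. finite F \<and> {g \<in> monoms n. b \<in> keys (xop n i (xpow g))} \<subseteq> F" by blast
qed

lemma finite_rows_yop: "finite_rows n (yop n i)"
proof (rule finite_rowsI)
  fix b
  have "g = b + uvec i" if "g \<in> monoms n" "b \<in> keys (yop n i (xpow g))" for g
  proof -
    from that have "0 < lookup g i" "b = g - uvec i" by (auto simp: yop_xpow split: if_splits)
    then show ?thesis by (intro poly_mapping_eqI) (auto simp: lookup_add lookup_minus lookup_single when_def)
  qed
  then show "\<exists>F. finite F \<and> {g \<in> monoms n. b \<in> keys (yop n i (xpow g))} \<subseteq> F"
    by (intro exI[of _ "{b + uvec i}"]) blast
qed

lemma finite_rows_op_add: "finite_rows n f \<Longrightarrow> finite_rows n g \<Longrightarrow> finite_rows n (op_add f g)"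
proof (rule finite_rowsI)
  fix b assume "finite_rows n f" "finite_rows n g"
  moreover have "{x \<in> monoms n. b \<in> keys (op_add f g (xpow x))}
      \<subseteq> {x \<in> monoms n. b \<in> keys (f (xpow x))} \<union> {x \<in> monoms n. b \<in> keys (g (xpow x))}"
    using keys_add by (fastforce simp: op_add_def)
  ultimately show "\<exists>F. finite F \<and> {x \<in> monoms n. b \<in> keys (op_add f g (xpow x))} \<subseteq> F"
    by (intro exI[of _ "{x \<in> monoms n. b \<in> keys (f (xpow x))} \<union> {x \<in> monoms n. b \<in> keys (g (xpow x))}"])
      (simp add: finite_rows_def)
qed

lemma finite_rows_op_smul: "finite_rows n f \<Longrightarrow> finite_rows n (op_smul c f)"
proof (rule finite_rowsI)
  fix b assume "finite_rows n f"
  moreover have "{x \<in> monoms n. b \<in> keys (op_smul c f (xpow x))} \<subseteq> {x \<in> monoms n. b \<in> keys (f (xpow x))}"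
    using keys_smul by (fastforce simp: op_smul_def)
  ultimately show "\<exists>F. finite F \<and> {x \<in> monoms n. b \<in> keys (op_smul c f (xpow x))} \<subseteq> F"
    by (intro exI[of _ "{x \<in> monoms n. b \<in> keys (f (xpow x))}"]) (simp add: finite_rows_def)
qed

text \<open>A monomial \<open>x\<^sup>b\<close> occurs in \<open>(f \<circ> g)(x\<^sup>h)\<close> only if it occurs in some \<open>f(x\<^sup>a)\<close> with \<open>x\<^sup>a\<close>
  occurring in \<open>g(x\<^sup>h)\<close>.\<close>
lemma finite_rows_comp:
  assumes f: "f \<in> EndK n" "finite_rows n f" and g: "g \<in> EndK n" "finite_rows n g"
  shows "finite_rows n (f \<circ> g)"
proof (rule finite_rowsI)
  fix b
  let ?A = "{a \<in> monoms n. b \<in> keys (f (xpow a))}"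
  have "{x \<in> monoms n. b \<in> keys ((f \<circ> g) (xpow x))} \<subseteq> (\<Union>a\<in>?A. {x \<in> monoms n. a \<in> keys (g (xpow x))})"
  proof
    fix x assume x: "x \<in> {x \<in> monoms n. b \<in> keys ((f \<circ> g) (xpow x))}"
    have gx: "g (xpow x) \<in> Pn n" using x g by (simp add: EndK_in)
    have "b \<in> keys (\<Sum>a\<in>keys (g (xpow x)). smul (lookup (g (xpow x)) a) (f (xpow a)))"
      using x EndK_expand[OF f(1) gx] by simp
    then have "b \<in> (\<Union>a\<in>keys (g (xpow x)). keys (smul (lookup (g (xpow x)) a) (f (xpow a))))"
      by (rule subsetD[OF keys_sum])
    then obtain a where a: "a \<in> keys (g (xpow x))" "b \<in> keys (smul (lookup (g (xpow x)) a) (f (xpow a)))"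
      by blast
    then have "b \<in> keys (f (xpow a))" using keys_smul by blast
    then show "x \<in> (\<Union>a\<in>?A. {x \<in> monoms n. a \<in> keys (g (xpow x))})"
      using x a(1) Pn_keys[OF gx a(1)] by blast
  qed
  moreover have "finite (\<Union>a\<in>?A. {x \<in> monoms n. a \<in> keys (g (xpow x))})"
    using f(2) g(2) unfolding finite_rows_def by (intro finite_UN_I) auto
  ultimately show "\<exists>F. finite F \<and> {x \<in> monoms n. b \<in> keys ((f \<circ> g) (xpow x))} \<subseteq> F" by blast
qed

lemma Sn_finite_rows: "f \<in> Sn n \<Longrightarrow> finite_rows n f"
proof (induction rule: Sn.induct)
  case (S_comp f g)
  then show ?case by (intro finite_rows_comp Sn_EndK)
qed (simp_all add: finite_rows_idop finite_rows_xop finite_rows_yop finite_rows_op_add finite_rows_op_smul)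

lemma commut_op_add:
  assumes a: "a \<in> EndK n" and f: "f \<in> EndK n" and g: "g \<in> EndK n"
  shows "commut a (op_add f g) = op_add (commut a f) (commut a g)"
proof
  fix p show "commut a (op_add f g) p = op_add (commut a f) (commut a g) p"
  proof (cases "p \<in> Pn n")
    case True
    then have "a (f p + g p) = a (f p) + a (g p)"
      using f g by (intro EndK_add[OF a]) (simp_all add: EndK_in)
    then show ?thesis by (simp add: commut_def op_diff_def op_add_def)
  next
    case False
    then show ?thesis using a f g by (simp add: commut_def op_diff_def op_add_def EndK_out EndK_zero)
  qed
qed

lemma commut_op_smul:
  assumes a: "a \<in> EndK n" and f: "f \<in> EndK n"
  shows "commut a (op_smul c f) = op_smul c (commut a f)"
proof
  fix p show "commut a (op_smul c f) p = op_smul c (commut a f) p"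
  proof (cases "p \<in> Pn n")
    case True
    then have "a (smul c (f p)) = smul c (a (f p))"
      using f by (intro EndK_smul[OF a]) (simp add: EndK_in)
    then show ?thesis by (simp add: commut_def op_diff_def op_smul_def smul_diff)
  next
    case False
    then show ?thesis using a f by (simp add: commut_def op_diff_def op_smul_def EndK_out EndK_zero)
  qed
qed

lemma commut_comp:
  assumes a: "a \<in> EndK n" and f: "f \<in> EndK n" and g: "g \<in> EndK n"
  shows "commut a (f \<circ> g) = op_add (commut a f \<circ> g) (f \<circ> commut a g)"
proof
  fix p show "commut a (f \<circ> g) p = op_add (commut a f \<circ> g) (f \<circ> commut a g) p"
  proof (cases "p \<in> Pn n")
    case True
    then have "f (a (g p) - g (a p)) = f (a (g p)) - f (g (a p))"
      using a g by (intro EndK_diff[OF f]) (simp_all add: EndK_in)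
    then show ?thesis by (simp add: commut_def op_diff_def op_add_def)
  next
    case False
    then show ?thesis using a f g by (simp add: commut_def op_diff_def op_add_def EndK_out EndK_zero)
  qed
qed

section \<open>The case \<open>n = 1\<close>\<close>

lemma monoms_one: "b \<in> monoms 1 \<Longrightarrow> b = single 0 (lookup b 0)"
  by (rule poly_mapping_eqI) (simp add: lookup_single when_def monoms_out)

lemma S1_commut: "(f :: 'k::field_char_0 pol \<Rightarrow> 'k pol) \<in> Sn 1 \<Longrightarrow> commut (xop 1 0) f \<in> Fn 1"
proof (induction rule: Sn.induct)
  case S_one
  show ?case
    by (rule commut_xop_in_FnI[where B="{}"]) (simp_all add: EndK_idop xpow_mult add.commute)
next
  case (S_x i)
  then show ?case
    by (intro commut_xop_in_FnI[where B="{}"]) (simp_all add: EndK_xop xop_xpow xpow_mult add.commute)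
next
  case (S_y i)
  have "commut (xop 1 0) (yop 1 0 :: 'k pol \<Rightarrow> 'k pol) \<in> Fn 1"
  proof (rule commut_xop_in_FnI[where B="{0}"])
    fix g :: "nat \<Rightarrow>\<^sub>0 nat" assume g: "g \<in> monoms 1" "g \<notin> {0}"
    have g0: "g = single 0 (lookup g 0)" using monoms_one[OF g(1)] .
    then have "0 < lookup g 0" using g(2) by (metis neq0_conv single_zero singletonI)
    then have "uvec 0 + (g - uvec 0) = g"
      by (intro poly_mapping_eqI) (auto simp: lookup_add lookup_minus lookup_single when_def)
    moreover have "g + uvec 0 - uvec 0 = g"
      by (intro poly_mapping_eqI) (simp add: lookup_add lookup_minus)
    ultimately show "yop 1 0 (xpow (g + uvec 0)) = xpow (uvec 0) * (yop 1 0 (xpow g) :: 'k pol)"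
      using g(1) \<open>0 < lookup g 0\<close> by (simp add: yop_xpow lookup_add xpow_mult)
  qed (simp_all add: EndK_yop)
  then show ?case using S_y by simp
next
  case (S_add f g)
  have "commut (xop 1 0) (op_add f g) = op_add (commut (xop 1 0) f) (commut (xop 1 0) g)"
    using S_add.hyps by (intro commut_op_add[OF EndK_xop Sn_EndK Sn_EndK]) simp_all
  then show ?case using S_add.IH by (simp add: Fn_add)
next
  case (S_smul f c)
  have "commut (xop 1 0) (op_smul c f) = op_smul c (commut (xop 1 0) f)"
    using S_smul.hyps by (intro commut_op_smul[OF EndK_xop Sn_EndK]) simp_all
  then show ?case using S_smul.IH by (simp add: Fn_smul)
next
  case (S_comp f g)
  have "commut (xop 1 0) (f \<circ> g) = op_add (commut (xop 1 0) f \<circ> g) (f \<circ> commut (xop 1 0) g)"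
    using S_comp.hyps by (intro commut_comp[OF EndK_xop Sn_EndK Sn_EndK]) simp_all
  moreover have "commut (xop 1 0) f \<circ> g \<in> Fn 1"
    using S_comp by (intro Fn_comp_right Sn_EndK Sn_finite_rows) simp_all
  moreover have "f \<circ> commut (xop 1 0) g \<in> Fn 1"
    using S_comp by (intro Fn_comp_left Sn_EndK) simp_all
  ultimately show ?case by (simp only: Fn_add)
qed

text \<open>In one variable, \<open>\<phi>(x\<^sup>g) = x\<^sup>g\<^sup>-\<^sup>M R\<close> for \<open>g \<ge> M\<close>, which is the value of \<open>R(x) y\<^sup>M \<in> \<SS>\<^sub>1\<close>; the
  difference lies in \<open>F\<^sub>1 \<subseteq> \<SS>\<^sub>1\<close>.\<close>
lemma commut_condition_S1:
  assumes \<phi>: "\<phi> \<in> EndK 1" and comm: "\<forall>i<1. commut (xop 1 i) \<phi> \<in> Fn 1"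
  shows "\<phi> \<in> Sn 1"
proof -
  obtain M where mult: "\<And>g d. g \<in> monoms 1 \<Longrightarrow> d \<in> monoms 1 \<Longrightarrow> \<exists>j<1. M \<le> lookup g j
      \<Longrightarrow> \<phi> (xpow (g + d)) = xpow d * \<phi> (xpow g)"
    using eventually_multiplicative[OF \<phi> comm] by blast
  define R where "R = \<phi> (xpow (single 0 M))"
  define yM :: "'a pol \<Rightarrow> 'a pol" where "yM = (yop 1 0 ^^ M) \<circ> idop 1"
  define \<chi> where "\<chi> = (\<lambda>p. \<Sum>b\<in>keys R. op_smul (lookup R b) ((xop 1 0 ^^ lookup b 0) \<circ> yM) p)"
  have "yM \<in> Sn 1" unfolding yM_def by (intro Sn_funpow Sn.S_y Sn.S_one) simp
  then have \<chi>: "\<chi> \<in> Sn 1" unfolding \<chi>_def by (intro Sn_sum Sn.S_smul Sn_funpow Sn.S_x) simp_all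
  have RP: "R \<in> Pn 1" using \<phi> by (simp add: R_def EndK_in)
  have agree: "\<phi> (xpow g) = \<chi> (xpow g)" if g: "g \<in> monoms 1" "M \<le> lookup g 0" for g
  proof -
    have g_split: "single 0 M + (g - single 0 M) = g"
      using g monoms_one[OF g(1)] by (auto intro!: poly_mapping_eqI simp: lookup_add lookup_minus lookup_single when_def)
    have "\<phi> (xpow g) = xpow (g - single 0 M) * R"
      using mult[of "single 0 M" "g - single 0 M"] g g_split by (simp add: R_def)
    also have "\<dots> = xpow (g - single 0 M) * (\<Sum>b\<in>keys R. single b (lookup R b))"
      by (simp flip: poly_expand)
    also have "\<dots> = (\<Sum>b\<in>keys R. single (g - single 0 M + b) (lookup R b))"
      by (simp add: sum_distrib_left mult_single)
    also have "\<dots> = \<chi> (xpow g)"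
      unfolding \<chi>_def op_smul_def
    proof (rule sum.cong)
      fix b assume "b \<in> keys R"
      then have b: "b = single 0 (lookup b 0)" using monoms_one Pn_keys[OF RP] by blast
      have "((xop 1 0 ^^ lookup b 0) \<circ> yM) (xpow g) = xpow (g - single 0 M + b)"
        using g by (subst b) (simp add: yM_def ypow_funpow xpow_funpow)
      then show "single (g - single 0 M + b) (lookup R b)
          = smul (lookup R b) (((xop 1 0 ^^ lookup b 0) \<circ> yM) (xpow g))"
        by (simp add: smul_single)
    qed simp
    finally show ?thesis .
  qed
  have "op_diff \<phi> \<chi> \<in> Fn 1"
    using agree by (intro diff_in_Fn[OF \<phi> Sn_EndK[OF \<chi>] finite_box[of 1 M]]) (auto simp: not_less)
  then have "op_add \<chi> (op_diff \<phi> \<chi>) \<in> Sn 1"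
    by (intro Sn.S_add \<chi> Fn_Sn)
  moreover have "op_add \<chi> (op_diff \<phi> \<chi>) = \<phi>"
    by (simp add: op_add_def op_diff_def)
  ultimately show ?thesis by simp
qed

theorem corollary6p6:
  fixes n :: nat
  assumes "n \<ge> 1"
  shows "{\<phi> \<in> (EndK n :: ('k::field_char_0 pol \<Rightarrow> 'k pol) set).
            \<forall>i<n. commut (xop n i) \<phi> \<in> Fn n}
         = (if n = 1 then Sn n else PplusF n)"
proof (cases "n = 1")
  case True
  have "\<phi> \<in> Sn 1 \<Longrightarrow> \<forall>i<1. commut (xop 1 i) \<phi> \<in> Fn 1" for \<phi> :: "'k pol \<Rightarrow> 'k pol"
    using S1_commut by simp
  then show ?thesis
    using True commut_condition_S1 Sn_EndK by auto
next
  case False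
  then have "2 \<le> n" using assms by simp
  then show ?thesis
    using False commut_condition_PplusF PplusF_commut by (simp add: set_eq_iff) blast
qed

end
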